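(* Let $A$ and $A'$ be semisimple elements in $\mathrm{Sp}(n,1)$. Then $A=A'$ if and only if they have the same real trace, the same projective fixed points and the same point on each of the eigenvalue Grassmannians.
   Context: $\mathrm{Sp}(n,1)$ is the isometry group of a Hermitian form of signature $(n,1)$ on $\mathbb H^{n,1}$. Real trace: writing $A=A_1+{\bf j}A_2$ with complex $A_1,A_2$, $A_{\mathbb C}=\begin{pmatrix}A_1&-\overline{A_2}\\ A_2&\overline{A_1}\end{pmatrix}\in\mathrm{GL}(2n+2,\mathbb C)$ has characteristic polynomial $\sum_{j=0}^{2n+2}a_jx^{2n+2-j}$ and the real trace is $(a_1,\ldots,a_n)$. If ${\bf x}$ is an eigenvector for an eigenvalue $\lambda$ of $A$, its image $x\in\mathbb H\mathbb P^n$ is a projective fixed point of $A$ for the similarity class $[\lambda]$; two semisimple elements with the same eigenvalue classes have the same projective fixed points if for each non-real class they have the same projective fixed point (i.e. the chosen eigenvectors of $A'$ are right quaternionic multiples of those of $A$). For a non-real eigenvalue class $[\lambda]$ of multiplicity $m$ with representative $\lambda$, the eigenset $\{x:Ax=x\lambda\}$ is a complex $m$-dimensional subspace of the $[\lambda]$-eigenspace $\cong\mathbb C^{2m}$; the set of eigensets is the complex Grassmannian $G_{m,2m}$ (the $[\lambda]$-eigenvalue Grassmannian), and $A,A'$ have the same point on it if they have the same eigenset for the representative $\lambda$. *)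

theory Defs
  imports Complex_Main "Jordan_Normal_Form.Char_Poly"
begin

text \<open>Quat a b stands for the quaternion a + j b (a, b complex; j z = conj z j).\<close>
datatype quat = Quat (qa: complex) (qb: complex)

definition qzero :: quat where "qzero = Quat 0 0"
definition qone :: quat where "qone = Quat 1 0"
definition qadd :: "quat \<Rightarrow> quat \<Rightarrow> quat" where
  "qadd p q = Quat (qa p + qa q) (qb p + qb q)"
text \<open>(a + j b)(c + j d) = (a c - conj b d) + j (conj a d + b c)\<close>
definition qmult :: "quat \<Rightarrow> quat \<Rightarrow> quat" where
  "qmult p q = Quat (qa p * qa q - cnj (qb p) * qb q) (cnj (qa p) * qb q + qb p * qa q)"
definition qconj :: "quat \<Rightarrow> quat" where
  "qconj q = Quat (cnj (qa q)) (- qb q)"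
definition qnormsq :: "quat \<Rightarrow> real" where
  "qnormsq q = (cmod (qa q))\<^sup>2 + (cmod (qb q))\<^sup>2"
definition qinv :: "quat \<Rightarrow> quat" where
  "qinv q = Quat (cnj (qa q) / complex_of_real (qnormsq q)) (- qb q / complex_of_real (qnormsq q))"
definition qreal :: "quat \<Rightarrow> bool" where
  "qreal q \<longleftrightarrow> qb q = 0 \<and> Im (qa q) = 0"
definition qof_real :: "real \<Rightarrow> quat" where
  "qof_real r = Quat (complex_of_real r) 0"

definition qsimilar :: "quat \<Rightarrow> quat \<Rightarrow> bool" where
  "qsimilar l \<mu> \<longleftrightarrow> (\<exists>r. r \<noteq> qzero \<and> \<mu> = qmult (qinv r) (qmult l r))"

definition qsum :: "nat \<Rightarrow> (nat \<Rightarrow> quat) \<Rightarrow> quat" where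
  "qsum N f = Quat (\<Sum>k<N. qa (f k)) (\<Sum>k<N. qb (f k))"

section \<open>Quaternionic vectors and matrices of size N = n+1 (indices 0..n)\<close>

type_synonym qvec = "nat \<Rightarrow> quat"
type_synonym qmat = "nat \<Rightarrow> nat \<Rightarrow> quat"

definition qvecs :: "nat \<Rightarrow> qvec set" where
  "qvecs N = {x. \<forall>i. N \<le> i \<longrightarrow> x i = qzero}"
definition qmats :: "nat \<Rightarrow> qmat set" where
  "qmats N = {A. \<forall>i j. (N \<le> i \<or> N \<le> j) \<longrightarrow> A i j = qzero}"

definition qzerovec :: qvec where "qzerovec = (\<lambda>_. qzero)"

definition qmat_vec :: "nat \<Rightarrow> qmat \<Rightarrow> qvec \<Rightarrow> qvec" where
  "qmat_vec N A x = (\<lambda>i. qsum N (\<lambda>k. qmult (A i k) (x k)))"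

definition qvec_smul :: "qvec \<Rightarrow> quat \<Rightarrow> qvec" where
  "qvec_smul x q = (\<lambda>i. qmult (x i) q)"

definition qmat_mult :: "nat \<Rightarrow> qmat \<Rightarrow> qmat \<Rightarrow> qmat" where
  "qmat_mult N A B = (\<lambda>i j. qsum N (\<lambda>k. qmult (A i k) (B k j)))"

definition qmat_adj :: "qmat \<Rightarrow> qmat" where
  "qmat_adj A = (\<lambda>i j. qconj (A j i))"

text \<open>The Hermitian form of signature (n,1) on H^(n,1): J = diag(1,...,1,-1).\<close>
definition Jform :: "nat \<Rightarrow> qmat" where
  "Jform n = (\<lambda>i j. if i = j \<and> i < n then qone
                     else if i = j \<and> i = n then qof_real (-1) else qzero)"

definition Sp :: "nat \<Rightarrow> qmat set" where
  "Sp n = {A \<in> qmats (Suc n).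
             qmat_mult (Suc n) (qmat_adj A) (qmat_mult (Suc n) (Jform n) A) = Jform n}"

definition qindep :: "nat \<Rightarrow> nat \<Rightarrow> (nat \<Rightarrow> qvec) \<Rightarrow> bool" where
  "qindep N m v \<longleftrightarrow> (\<forall>c. (\<lambda>i. qsum m (\<lambda>k. qmult (v k i) (c k))) = qzerovec
                         \<longrightarrow> (\<forall>k<m. c k = qzero))"

text \<open>semisimple = diagonalizable: there is a basis of (right) eigenvectors\<close>
definition semisimple :: "nat \<Rightarrow> qmat \<Rightarrow> bool" where
  "semisimple N A \<longleftrightarrow> (\<exists>v \<mu>. (\<forall>k<N. v k \<in> qvecs N \<and>
          qmat_vec N A (v k) = qvec_smul (v k) (\<mu> k)) \<and> qindep N N v)"

text \<open>A = A1 + j A2 gives A_C = [[A1, -conj A2], [A2, conj A1]] of size 2N\<close>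
definition complexify :: "nat \<Rightarrow> qmat \<Rightarrow> complex mat" where
  "complexify N A = mat (2*N) (2*N) (\<lambda>(i,j).
      if i < N \<and> j < N then qa (A i j)
      else if i < N then - cnj (qb (A i (j - N)))
      else if j < N then qb (A (i - N) j)
      else cnj (qa (A (i - N) (j - N))))"

text \<open>char. polynomial of A_C is sum_j a_j x^(2n+2-j); real trace = (a_1,...,a_n)\<close>
definition real_trace :: "nat \<Rightarrow> qmat \<Rightarrow> complex list" where
  "real_trace n A = map (\<lambda>j. coeff (char_poly (complexify (Suc n) A)) (2*n+2-j)) [1..<Suc n]"

text \<open>the point of HP^n determined by a nonzero vector x (its right line minus 0)\<close>
definition qproj :: "qvec \<Rightarrow> qvec set" where
  "qproj x = {qvec_smul x q | q. q \<noteq> qzero}"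

definition is_eigvec :: "nat \<Rightarrow> qmat \<Rightarrow> qvec \<Rightarrow> quat \<Rightarrow> bool" where
  "is_eigvec N A x l \<longleftrightarrow> x \<in> qvecs N \<and> x \<noteq> qzerovec \<and> qmat_vec N A x = qvec_smul x l"

definition proj_fixed_points :: "nat \<Rightarrow> qmat \<Rightarrow> quat \<Rightarrow> qvec set set" where
  "proj_fixed_points N A \<mu> = {qproj x | x. \<exists>l. qsimilar \<mu> l \<and> is_eigvec N A x l}"

definition same_proj_fixed_points :: "nat \<Rightarrow> qmat \<Rightarrow> qmat \<Rightarrow> bool" where
  "same_proj_fixed_points n A A' \<longleftrightarrow>
     (\<forall>\<mu>. proj_fixed_points (Suc n) A \<mu> = proj_fixed_points (Suc n) A' \<mu>)"

definition eigenset :: "nat \<Rightarrow> qmat \<Rightarrow> quat \<Rightarrow> qvec set" where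
  "eigenset N A l = {x \<in> qvecs N. qmat_vec N A x = qvec_smul x l}"

text \<open>same point on the [lambda]-eigenvalue Grassmannian for every non-real
  eigenvalue class of A (for every representative lambda)\<close>
definition same_grassmannian_points :: "nat \<Rightarrow> qmat \<Rightarrow> qmat \<Rightarrow> bool" where
  "same_grassmannian_points n A A' \<longleftrightarrow>
     (\<forall>l. \<not> qreal l \<longrightarrow> (\<exists>x. is_eigvec (Suc n) A x l) \<longrightarrow>
          eigenset (Suc n) A l = eigenset (Suc n) A' l)"

end

theory Submission
  imports Defs
begin

text \<open>A semisimple A has a right basis of eigenvectors v k with A v k = v k \<mu> k, so it suffices
  to see that A' has the same eigenpairs. For a real eigenvalue the similarity class is a single
  point, so the projective fixed point of A' for that class is the line of v k with the same
  eigenvalue; for a non-real eigenvalue, v k lies in the eigenset of \<mu> k, which A and A' share.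
  Two quaternionic matrices agreeing on a right basis are equal: their complexifications agree on
  the 2N complex vectors coming from v k and v k j, which form a basis of \<complex>^(2N).\<close>

lemma qmult_assoc: "qmult (qmult p q) r = qmult p (qmult q r)"
  by (simp add: qmult_def algebra_simps)

lemma qmult_qone_left [simp]: "qmult qone q = q"
  and qmult_qone_right [simp]: "qmult q qone = q"
  by (simp_all add: qmult_def qone_def)

lemma qmult_qinv_left:
  assumes "r \<noteq> qzero"
  shows "qmult (qinv r) r = qone"
proof -
  obtain a b where r: "r = Quat a b" by (cases r)
  have nz: "qnormsq r \<noteq> 0"
    using assms r by (auto simp: qnormsq_def qzero_def add_nonneg_eq_0_iff)
  have "a * cnj a + b * cnj b = complex_of_real (qnormsq r)"
    using r by (simp only: qnormsq_def of_real_add complex_norm_square) (simp add: mult.commute)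
  then have "a * cnj a / complex_of_real (qnormsq r) + b * cnj b / complex_of_real (qnormsq r) = 1"
    using nz by (simp flip: add_divide_distrib)
  then show ?thesis
    using r by (simp add: qmult_def qinv_def qone_def algebra_simps)
qed

lemma qmult_commute_qreal:
  assumes "qreal l"
  shows "qmult l q = qmult q l"
proof -
  have "qa l = complex_of_real (Re (qa l))"
    using assms by (simp add: qreal_def complex_eqI)
  then show ?thesis
    using assms by (cases l; cases q) (simp add: qreal_def qmult_def; metis complex_cnj_complex_of_real mult.commute)
qed

lemma qsimilar_refl: "qsimilar l l"
  unfolding qsimilar_def
  by (rule exI[of _ qone]) (simp add: qone_def qzero_def qinv_def qnormsq_def qmult_def)

lemma qsimilar_qreal_eq:
  assumes "qreal l" and "qsimilar l l'"
  shows "l' = l"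
proof -
  obtain r where r: "r \<noteq> qzero" "l' = qmult (qinv r) (qmult l r)"
    using assms(2) qsimilar_def by auto
  then show ?thesis
    using qmult_commute_qreal[OF assms(1)] qmult_qinv_left[OF r(1)] by (simp flip: qmult_assoc)
qed

lemma qsum_mult_right: "qmult (qsum N f) q = qsum N (\<lambda>k. qmult (f k) q)"
  by (simp add: qsum_def qmult_def sum_distrib_right sum_subtractf sum.distrib)

lemma qone_neq_qzero [simp]: "qone \<noteq> qzero"
  by (simp add: qone_def qzero_def)

lemma qvec_smul_qone [simp]: "qvec_smul x qone = x"
  by (simp add: qvec_smul_def)

lemma qvec_smul_assoc: "qvec_smul (qvec_smul x p) q = qvec_smul x (qmult p q)"
  by (simp add: qvec_smul_def qmult_assoc)

lemma qmat_vec_smul: "qmat_vec N A (qvec_smul x q) = qvec_smul (qmat_vec N A x) q"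
  by (simp add: qmat_vec_def qvec_smul_def qsum_mult_right qmult_assoc)

lemma qindep_nonzero:
  assumes "qindep N m v" and "k < m"
  shows "v k \<noteq> qzerovec"
proof
  assume vk: "v k = qzerovec"
  define c where "c k' = (if k' = k then qone else qzero)" for k'
  have "qmult (v k' i) (c k') = qzero" for k' i
    using vk by (simp add: c_def qzerovec_def qmult_def qzero_def)
  then have "(\<lambda>i. qsum m (\<lambda>k'. qmult (v k' i) (c k'))) = qzerovec"
    by (simp add: qsum_def qzerovec_def qzero_def)
  then have "c k = qzero"
    using assms qindep_def by blast
  then show False
    by (simp add: c_def)
qed

lemma eigvec_transfer_qreal:
  assumes "same_proj_fixed_points n A A'" and "qreal l" and "is_eigvec (Suc n) A x l"
  shows "qmat_vec (Suc n) A' x = qvec_smul x l"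
proof -
  have "qproj x \<in> proj_fixed_points (Suc n) A l"
    using assms(3) qsimilar_refl unfolding proj_fixed_points_def by blast
  then have "qproj x \<in> proj_fixed_points (Suc n) A' l"
    using assms(1) by (simp add: same_proj_fixed_points_def)
  then obtain x' l' where x': "qproj x = qproj x'" "qsimilar l l'" "is_eigvec (Suc n) A' x' l'"
    unfolding proj_fixed_points_def by blast
  have "x \<in> qproj x"
    unfolding qproj_def by (rule CollectI, rule exI[of _ qone]) simp
  then obtain q where q: "x = qvec_smul x' q"
    using x'(1) unfolding qproj_def by auto
  have "qmat_vec (Suc n) A' x = qvec_smul (qvec_smul x' l) q"
    using q x'(3) qsimilar_qreal_eq[OF assms(2) x'(2)] by (simp add: qmat_vec_smul is_eigvec_def)
  also have "\<dots> = qvec_smul x l"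
    using q by (simp add: qvec_smul_assoc qmult_commute_qreal[OF assms(2)])
  finally show ?thesis .
qed

lemma eigvec_transfer:
  assumes "same_proj_fixed_points n A A'" and "same_grassmannian_points n A A'"
    and "is_eigvec (Suc n) A x l"
  shows "qmat_vec (Suc n) A' x = qvec_smul x l"
proof (cases "qreal l")
  case True
  then show ?thesis
    using eigvec_transfer_qreal assms(1,3) by blast
next
  case False
  then have "eigenset (Suc n) A l = eigenset (Suc n) A' l"
    using assms(2,3) same_grassmannian_points_def by blast
  moreover have "x \<in> eigenset (Suc n) A l"
    using assms(3) by (simp add: eigenset_def is_eigvec_def)
  ultimately show ?thesis
    by (simp add: eigenset_def)
qed

text \<open>The vector x = x1 + j x2 of \<open>\<bbbH>\<^sup>N\<close> as the vector (x1, x2) of \<open>\<complex>\<^sup>2\<^sup>N\<close>,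
  compatible with complexify.\<close>
definition cvec_of_qvec :: "nat \<Rightarrow> qvec \<Rightarrow> complex vec" where
  "cvec_of_qvec N x = vec (2 * N) (\<lambda>j. if j < N then qa (x j) else qb (x (j - N)))"

lemma sum_lessThan_add: "(\<Sum>j<N + (M::nat). f j) = (\<Sum>j<N. f j) + (\<Sum>k<M. f (N + k))"
  by (induction M) (simp_all add: add.assoc)

lemma complexify_carrier_mat: "complexify N A \<in> carrier_mat (2 * N) (2 * N)"
  and dim_row_complexify [simp]: "dim_row (complexify N A) = 2 * N"
  and dim_col_complexify [simp]: "dim_col (complexify N A) = 2 * N"
  by (simp_all add: complexify_def)

lemma complexify_mult_cvec_of_qvec:
  "complexify N B *\<^sub>v cvec_of_qvec N x = cvec_of_qvec N (qmat_vec N B x)"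
proof (rule eq_vecI)
  fix r
  assume "r < dim_vec (cvec_of_qvec N (qmat_vec N B x))"
  then have r: "r < 2 * N"
    by (simp add: cvec_of_qvec_def)
  let ?x = "\<lambda>j. cvec_of_qvec N x $ j"
  have "(complexify N B *\<^sub>v cvec_of_qvec N x) $ r = (\<Sum>j<2 * N. complexify N B $$ (r, j) * ?x j)"
    using r by (simp add: complexify_def cvec_of_qvec_def scalar_prod_def atLeast0LessThan)
  also have "\<dots> = (\<Sum>j<N. complexify N B $$ (r, j) * ?x j)
                    + (\<Sum>k<N. complexify N B $$ (r, N + k) * ?x (N + k))"
    by (simp add: mult_2 sum_lessThan_add)
  also have "\<dots> = cvec_of_qvec N (qmat_vec N B x) $ r"
    using r by (cases "r < N")
      (simp_all add: complexify_def cvec_of_qvec_def qmat_vec_def qsum_def qmult_def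
         sum_subtractf sum_negf sum.distrib algebra_simps)
  finally show "(complexify N B *\<^sub>v cvec_of_qvec N x) $ r = cvec_of_qvec N (qmat_vec N B x) $ r" .
qed (simp add: complexify_def cvec_of_qvec_def)

lemma cvec_of_qvec_eq_zero:
  assumes "x \<in> qvecs N" and "cvec_of_qvec N x = 0\<^sub>v (2 * N)"
  shows "x = qzerovec"
proof
  fix i
  show "x i = qzerovec i"
  proof (cases "i < N")
    case True
    have "cvec_of_qvec N x $ i = 0" "cvec_of_qvec N x $ (N + i) = 0"
      using assms(2) True by simp_all
    then show ?thesis
      using True by (simp add: cvec_of_qvec_def qzerovec_def qzero_def quat.expand)
  next
    case False
    then show ?thesis
      using assms(1) by (simp add: qvecs_def qzerovec_def)
  qed
qed

lemma complexify_inj: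
  assumes "A \<in> qmats N" and "A' \<in> qmats N" and "complexify N A = complexify N A'"
  shows "A = A'"
proof (intro ext)
  fix i j
  show "A i j = A' i j"
  proof (cases "i < N \<and> j < N")
    case True
    have "complexify N A $$ (i, j) = complexify N A' $$ (i, j)"
      "complexify N A $$ (N + i, j) = complexify N A' $$ (N + i, j)"
      using assms(3) by simp_all
    then show ?thesis
      using True by (simp add: complexify_def quat.expand)
  next
    case False
    then show ?thesis
      using assms(1,2) by (auto simp: qmats_def)
  qed
qed

lemma mat_mult_right_cancel_det_nonzero:
  fixes M M' V :: "'a :: field mat"
  assumes "M \<in> carrier_mat m k" and "M' \<in> carrier_mat m k" and "V \<in> carrier_mat k k"
    and "det V \<noteq> 0" and "M * V = M' * V"
  shows "M = M'"
proof -
  obtain W where W: "W \<in> carrier_mat k k" "V * W = 1\<^sub>m k"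
    using det_non_zero_imp_unit[OF assms(3,4), of undefined] by (auto simp: Units_def ring_mat_simps)
  have "M = M * V * W"
    using assms(1,3) W by simp
  also have "\<dots> = M' * V * W"
    using assms(5) by simp
  also have "\<dots> = M'"
    using assms(2,3) W by simp
  finally show ?thesis .
qed

definition qj :: quat where "qj = Quat 0 1"

definition right_basis_cmat :: "nat \<Rightarrow> (nat \<Rightarrow> qvec) \<Rightarrow> complex mat" where
  "right_basis_cmat N v = mat (2 * N) (2 * N) (\<lambda>(i, c).
     cvec_of_qvec N (if c < N then v c else qvec_smul (v (c - N)) qj) $ i)"

lemma right_basis_cmat_mult_vec:
  assumes "c \<in> carrier_vec (2 * N)"
  shows "right_basis_cmat N v *\<^sub>v c
           = cvec_of_qvec N (\<lambda>i. qsum N (\<lambda>k. qmult (v k i) (Quat (c $ k) (c $ (N + k)))))"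
proof (rule eq_vecI)
  fix i
  assume "i < dim_vec (cvec_of_qvec N (\<lambda>i. qsum N (\<lambda>k. qmult (v k i) (Quat (c $ k) (c $ (N + k))))))"
  then have i: "i < 2 * N"
    by (simp add: cvec_of_qvec_def)
  let ?V = "right_basis_cmat N v"
  have "(?V *\<^sub>v c) $ i = (\<Sum>j<N. ?V $$ (i, j) * c $ j) + (\<Sum>k<N. ?V $$ (i, N + k) * c $ (N + k))"
    using assms i by (simp add: right_basis_cmat_def scalar_prod_def atLeast0LessThan mult_2 sum_lessThan_add)
  also have "\<dots> = cvec_of_qvec N (\<lambda>i. qsum N (\<lambda>k. qmult (v k i) (Quat (c $ k) (c $ (N + k))))) $ i"
    using i by (cases "i < N")
      (simp_all add: right_basis_cmat_def cvec_of_qvec_def qsum_def qmult_def qvec_smul_def qj_def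
         sum.distrib sum_subtractf sum_negf algebra_simps)
  finally show "(?V *\<^sub>v c) $ i = \<dots>" .
qed (simp add: right_basis_cmat_def cvec_of_qvec_def)

lemma det_right_basis_cmat_nonzero:
  assumes "qindep N N v" and "\<And>k. k < N \<Longrightarrow> v k \<in> qvecs N"
  shows "det (right_basis_cmat N v) \<noteq> 0"
proof -
  have "c = 0\<^sub>v (2 * N)"
    if c: "c \<in> carrier_vec (2 * N)" and Vc: "right_basis_cmat N v *\<^sub>v c = 0\<^sub>v (2 * N)" for c
  proof -
    define e where "e k = Quat (c $ k) (c $ (N + k))" for k
    have "(\<lambda>i. qsum N (\<lambda>k. qmult (v k i) (e k))) \<in> qvecs N"
      using assms(2) by (simp add: qvecs_def qsum_def qmult_def qzero_def)
    then have "(\<lambda>i. qsum N (\<lambda>k. qmult (v k i) (e k))) = qzerovec"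
      using Vc right_basis_cmat_mult_vec[OF c] cvec_of_qvec_eq_zero by (simp add: e_def)
    then have e: "\<forall>k<N. e k = qzero"
      using assms(1) qindep_def by blast
    show ?thesis
    proof (rule eq_vecI)
      fix i
      assume "i < dim_vec (0\<^sub>v (2 * N))"
      then consider "i < N" | "i - N < N" "i = N + (i - N)"
        by fastforce
      then show "c $ i = 0\<^sub>v (2 * N) $ i"
        using e \<open>i < dim_vec (0\<^sub>v (2 * N))\<close> by cases (auto simp: e_def qzero_def)
    qed (use c in simp)
  qed
  then show ?thesis
    by (subst det_0_iff_vec_prod_zero[of _ "2 * N"]) (auto simp: right_basis_cmat_def)
qed

lemma qmat_eq_if_eq_on_right_basis:
  assumes "qindep N N v" and "\<And>k. k < N \<Longrightarrow> v k \<in> qvecs N"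
    and "\<And>k. k < N \<Longrightarrow> qmat_vec N A (v k) = qmat_vec N A' (v k)"
    and "A \<in> qmats N" and "A' \<in> qmats N"
  shows "A = A'"
proof -
  let ?V = "right_basis_cmat N v"
  have V: "?V \<in> carrier_mat (2 * N) (2 * N)"
    by (simp add: right_basis_cmat_def)
  have det_V: "det ?V \<noteq> 0"
    using assms(1,2) by (rule det_right_basis_cmat_nonzero)
  have cols: "complexify N A *\<^sub>v col ?V c = complexify N A' *\<^sub>v col ?V c" if "c < 2 * N" for c
  proof -
    have "col ?V c = cvec_of_qvec N (if c < N then v c else qvec_smul (v (c - N)) qj)"
      using that by (auto simp: right_basis_cmat_def cvec_of_qvec_def)
    then show ?thesis
      using that assms(3)[of c] assms(3)[of "c - N"]
      by (simp add: complexify_mult_cvec_of_qvec qmat_vec_smul)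
  qed
  have col_eq: "col (complexify N A * ?V) c = col (complexify N A' * ?V) c" if "c < 2 * N" for c
    using cols[OF that] col_mult2[OF complexify_carrier_mat V that] by metis
  have "complexify N A * ?V = complexify N A' * ?V"
    by (rule mat_col_eqI) (use V col_eq in auto)
  then have "complexify N A = complexify N A'"
    by (rule mat_mult_right_cancel_det_nonzero[OF complexify_carrier_mat complexify_carrier_mat V det_V])
  then show ?thesis
    using complexify_inj assms(4,5) by blast
qed

theorem proposition4p3:
  fixes n :: nat and A A' :: qmat
  assumes "A \<in> Sp n" and "A' \<in> Sp n"
    and "semisimple (Suc n) A" and "semisimple (Suc n) A'"
  shows "A = A' \<longleftrightarrow>
           real_trace n A = real_trace n A' \<and>
           same_proj_fixed_points n A A' \<and>
           same_grassmannian_points n A A'"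
proof
  assume "A = A'"
  then show "real_trace n A = real_trace n A' \<and> same_proj_fixed_points n A A' \<and>
           same_grassmannian_points n A A'"
    by (simp add: same_proj_fixed_points_def same_grassmannian_points_def)
next
  assume same: "real_trace n A = real_trace n A' \<and> same_proj_fixed_points n A A' \<and>
           same_grassmannian_points n A A'"
  obtain v \<mu> where v: "\<And>k. k < Suc n \<Longrightarrow> v k \<in> qvecs (Suc n)"
    and eig: "\<And>k. k < Suc n \<Longrightarrow> qmat_vec (Suc n) A (v k) = qvec_smul (v k) (\<mu> k)"
    and indep: "qindep (Suc n) (Suc n) v"
    using assms(3) semisimple_def by blast
  have agree: "qmat_vec (Suc n) A (v k) = qmat_vec (Suc n) A' (v k)" if k: "k < Suc n" for k
  proof -
    have "is_eigvec (Suc n) A (v k) (\<mu> k)"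
      using v[OF k] eig[OF k] qindep_nonzero[OF indep k] by (simp add: is_eigvec_def)
    then show ?thesis
      using eig[OF k] eigvec_transfer same by metis
  qed
  have "A \<in> qmats (Suc n)" "A' \<in> qmats (Suc n)"
    using assms(1,2) by (simp_all add: Sp_def)
  with indep v agree show "A = A'"
    by (rule qmat_eq_if_eq_on_right_basis)
qed

end
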